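(* Fix $k>0$ and $K>0$. Let $(\tau^\star,\delta^\star,\gamma^\star,s^* )$ be such that $1<\delta^\star<\Phi$, $\tau^\star=\tau_m(\delta^\star)$, and either $\gamma^\star=M_{\mathcal F}(\delta^\star)/(1+k)$ and $s^*=\pi/2$, or $0<k<1$, $\gamma^\star=M_{\mathcal F}(\delta^\star)/(1-k)$ and $s^*=3\pi/2$. Let $H=\{(\tau,\delta,\gamma,s):\ 0<\tau\le1,\ \delta>1,\ \gamma>0,\ s\in S^1,\ g(\tau,s)=0,\ \text{and } D\mathcal G_\tau(\tau,s)\text{ has eigenvalues } e^{\pm i\theta}\text{ for some }\theta\in(0,\pi)\}$, where $g$ and $\mathcal G_\tau$ are computed with parameters $\delta,\gamma$. Then $(\tau^\star,\delta^\star,\gamma^\star,s^* )$ is an accumulation point of $H$. Moreover, if $\mathbf p(\tau,\delta,\gamma,s)=(\tau,\delta,\gamma)$, then $\mathbf p(H)$ contains a smooth two-dimensional surface in $\mathbb R^3$ having $(\tau^\star,\delta^\star,\gamma^\star)$ in its closure.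
   Context: Let $p(\delta)=-\delta^2+\delta+1$, $\Phi=(1+\sqrt5)/2$, $\mathcal F_\delta(\tau)=\tau^{p(\delta)}-\tau^\delta$; for $1<\delta<\Phi$, $\tau_m(\delta)=(p(\delta)/\delta)^{1/(\delta^2-1)}$ is the maximiser of $\mathcal F_\delta$ on $(0,1]$ and $M_{\mathcal F}(\delta)=\mathcal F_\delta(\tau_m(\delta))$. With $S^1=\mathbb R/2\pi\mathbb Z$, $g(\tau,s)=\tau^{\delta^2}+\gamma\tau^{\delta^2-\delta}(1+k\sin s)-\tau$, and $\mathcal G_\tau(y,s)=\left(y^{\delta^2}+\gamma y^{\delta^2-\delta}(1+k\sin s),\ s-\frac{\ln y}{K}+\frac{\ln\tau}{K}\right)$ with derivative $D\mathcal G_\tau(y,s)=\begin{pmatrix}\delta^2y^{\delta^2-1}+\gamma(\delta^2-\delta)y^{-p(\delta)}(1+k\sin s) & \gamma k y^{\delta^2-\delta}\cos s\\ -\frac{1}{Ky} & 1\end{pmatrix}$; $D\mathcal G_\tau(\tau,s)$ denotes this matrix at $y=\tau$. *)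

theory Defs
  imports "HOL-Analysis.Analysis"
begin

definition pexp :: "real \<Rightarrow> real" where
  "pexp \<delta> = - \<delta>\<^sup>2 + \<delta> + 1"

definition Phi :: real where
  "Phi = (1 + sqrt 5) / 2"

definition FF :: "real \<Rightarrow> real \<Rightarrow> real" where
  "FF \<delta> \<tau> = \<tau> powr (pexp \<delta>) - \<tau> powr \<delta>"

definition tau_m :: "real \<Rightarrow> real" where
  "tau_m \<delta> = (pexp \<delta> / \<delta>) powr (1 / (\<delta>\<^sup>2 - 1))"

definition M_F :: "real \<Rightarrow> real" where
  "M_F \<delta> = FF \<delta> (tau_m \<delta>)"

text \<open>g(tau,s) with parameters k, delta, gamma; s is a real representative of a point of S^1.\<close>
definition gfun :: "real \<Rightarrow> real \<Rightarrow> real \<Rightarrow> real \<Rightarrow> real \<Rightarrow> real" where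
  "gfun k \<delta> \<gamma> \<tau> s =
     \<tau> powr (\<delta>\<^sup>2) + \<gamma> * \<tau> powr (\<delta>\<^sup>2 - \<delta>) * (1 + k * sin s) - \<tau>"

text \<open>The derivative matrix D G_tau(y,s) (it does not depend on tau).\<close>
definition DG :: "real \<Rightarrow> real \<Rightarrow> real \<Rightarrow> real \<Rightarrow> real \<Rightarrow> real \<Rightarrow> real^2^2" where
  "DG k K \<delta> \<gamma> y s = vector
     [vector [\<delta>\<^sup>2 * y powr (\<delta>\<^sup>2 - 1) + \<gamma> * (\<delta>\<^sup>2 - \<delta>) * y powr (- pexp \<delta>) * (1 + k * sin s),
              \<gamma> * k * y powr (\<delta>\<^sup>2 - \<delta>) * cos s],
      vector [- 1 / (K * y), 1]]"

definition eigenvalues_C :: "real^'n^'n \<Rightarrow> complex set" where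
  "eigenvalues_C A = {\<mu>. \<exists>v :: complex^'n. v \<noteq> 0 \<and>
      (\<chi> i j. complex_of_real (A $ i $ j)) *v v = \<mu> *s v}"

definition Hset :: "real \<Rightarrow> real \<Rightarrow> (real \<times> real \<times> real \<times> real) set" where
  "Hset k K = {(\<tau>, \<delta>, \<gamma>, s). 0 < \<tau> \<and> \<tau> \<le> 1 \<and> \<delta> > 1 \<and> \<gamma> > 0 \<and>
      gfun k \<delta> \<gamma> \<tau> s = 0 \<and>
      (\<exists>\<theta>\<in>{0<..<pi}. eigenvalues_C (DG k K \<delta> \<gamma> \<tau> s) = {cis \<theta>, cis (- \<theta>)})}"

definition proj3 :: "real \<times> real \<times> real \<times> real \<Rightarrow> real \<times> real \<times> real" where
  "proj3 x = (case x of (\<tau>, \<delta>, \<gamma>, s) \<Rightarrow> (\<tau>, \<delta>, \<gamma>))"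

text \<open>C-infinity real functions on an open set U of R^2: coinductively, continuous with
  partial derivatives existing (Frechet) that are again C-infinity.\<close>
coinductive Cinf_on :: "(real \<times> real) set \<Rightarrow> (real \<times> real \<Rightarrow> real) \<Rightarrow> bool" for U where
  "continuous_on U f \<Longrightarrow>
   (\<forall>z\<in>U. (f has_derivative (\<lambda>h. fst h * fx z + snd h * fy z)) (at z)) \<Longrightarrow>
   Cinf_on U fx \<Longrightarrow> Cinf_on U fy \<Longrightarrow> Cinf_on U f"

definition smooth_param :: "(real \<times> real) set \<Rightarrow> (real \<times> real \<Rightarrow> real \<times> real \<times> real) \<Rightarrow> bool" where
  "smooth_param U \<phi> \<longleftrightarrow> open U \<and>
     Cinf_on U (\<lambda>z. fst (\<phi> z)) \<and> Cinf_on U (\<lambda>z. fst (snd (\<phi> z))) \<and>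
     Cinf_on U (\<lambda>z. snd (snd (\<phi> z))) \<and>
     (\<forall>z\<in>U. \<exists>D. (\<phi> has_derivative D) (at z) \<and> inj D)"

text \<open>Smooth two-dimensional (embedded) surface in R^3 (regular surface in the sense of do Carmo):
  each point has a neighbourhood V such that V \<inter> S is the homeomorphic image of a smooth
  regular parametrization.\<close>
definition smooth_surface :: "(real \<times> real \<times> real) set \<Rightarrow> bool" where
  "smooth_surface S \<longleftrightarrow> (\<forall>x\<in>S. \<exists>V U \<phi> \<psi>. open V \<and> x \<in> V \<and> smooth_param U \<phi> \<and>
       homeomorphism U (V \<inter> S) \<phi> \<psi>)"

end

theory Submission
  imports Defs
begin

text \<open>For \<open>0 < \<tau> < \<tau>\<^sub>m(\<delta>)\<close> the conditions defining \<open>H\<close> can be solved for \<open>(\<gamma>, s)\<close>: the trace of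
  \<open>D\<G>\<^sub>\<tau>(\<tau>, s)\<close> then lies in \<open>(1, 2)\<close>, so the eigenvalue condition is \<open>det = 1\<close>, i.e.
  \<open>\<gamma> cos s = C(\<tau>, \<delta>)\<close>, while \<open>g = 0\<close> reads \<open>\<gamma> (1 + k sin s) = \<F>\<^sub>\<delta>(\<tau>)\<close>.  Eliminating \<open>s\<close>
  gives a quadratic equation for \<open>\<gamma>\<close>.  On the open set of \<open>(\<tau>, \<delta>)\<close> where the relevant root
  \<open>\<gamma>(\<tau>, \<delta>)\<close> and the angle \<open>s(\<tau>, \<delta>)\<close> are well defined, \<open>(\<tau>, \<delta>, \<gamma>(\<tau>, \<delta>), s(\<tau>, \<delta>)) \<in> H\<close>,
  so the graph of the smooth function \<open>\<gamma>\<close> is a surface inside \<open>\<^bold>p(H)\<close>.  At \<open>\<tau> = \<tau>\<^sub>m(\<delta>\<^sup>*)\<close>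
  one has \<open>C = 0\<close>, the root equals \<open>\<gamma>\<^sup>*\<close> and the angle \<open>s\<^sup>*\<close>; letting \<open>\<tau>\<close> tend to \<open>\<tau>\<^sub>m(\<delta>\<^sup>*)\<close> from below gives
  both the accumulation point and the boundary point of the surface.\<close>

section \<open>Smooth functions on open subsets of the plane\<close>

definition has_partials_on ::
    "(real \<times> real) set \<Rightarrow> (real \<times> real \<Rightarrow> real) \<Rightarrow> (real \<times> real \<Rightarrow> real) \<Rightarrow> (real \<times> real \<Rightarrow> real) \<Rightarrow> bool"
  where "has_partials_on U f fx fy \<longleftrightarrow>
    (\<forall>z\<in>U. (f has_derivative (\<lambda>h. fst h * fx z + snd h * fy z)) (at z))"

text \<open>Smoothness is proved by coinduction up to sums and products: the functions of a candidate
  family \<open>X\<close> need only have partials in the closure of \<open>X\<close> together with the \<open>C\<^sup>\<infinity>\<close> functions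
  under \<open>+\<close> and \<open>*\<close>, because the sum and product rules preserve that closure.\<close>

inductive Cinf_hull :: "(real \<times> real) set \<Rightarrow> ((real \<times> real \<Rightarrow> real) \<Rightarrow> bool) \<Rightarrow> (real \<times> real \<Rightarrow> real) \<Rightarrow> bool"
  for U X where
  base: "X f \<Longrightarrow> Cinf_hull U X f"
| Cinf: "Cinf_on U f \<Longrightarrow> Cinf_hull U X f"
| add: "Cinf_hull U X f \<Longrightarrow> Cinf_hull U X g \<Longrightarrow> Cinf_hull U X (\<lambda>z. f z + g z)"
| mult: "Cinf_hull U X f \<Longrightarrow> Cinf_hull U X g \<Longrightarrow> Cinf_hull U X (\<lambda>z. f z * g z)"

definition Cinf_step :: "(real \<times> real) set \<Rightarrow> ((real \<times> real \<Rightarrow> real) \<Rightarrow> bool) \<Rightarrow> (real \<times> real \<Rightarrow> real) \<Rightarrow> bool"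
  where "Cinf_step U X f \<longleftrightarrow> continuous_on U f \<and>
    (\<exists>fx fy. has_partials_on U f fx fy \<and> Cinf_hull U X fx \<and> Cinf_hull U X fy)"

lemma Cinf_on_continuous: "Cinf_on U f \<Longrightarrow> continuous_on U f"
  by (cases rule: Cinf_on.cases) auto

lemma Cinf_on_has_partials:
  "Cinf_on U f \<Longrightarrow> \<exists>fx fy. has_partials_on U f fx fy \<and> Cinf_on U fx \<and> Cinf_on U fy"
  by (cases rule: Cinf_on.cases) (auto simp: has_partials_on_def)

lemma has_partials_on_add:
  assumes "has_partials_on U f fx fy" "has_partials_on U g gx gy"
  shows "has_partials_on U (\<lambda>z. f z + g z) (\<lambda>z. fx z + gx z) (\<lambda>z. fy z + gy z)"
  unfolding has_partials_on_def
proof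
  fix z assume "z \<in> U"
  with assms have "(f has_derivative (\<lambda>h. fst h * fx z + snd h * fy z)) (at z)"
    "(g has_derivative (\<lambda>h. fst h * gx z + snd h * gy z)) (at z)"
    by (auto simp: has_partials_on_def)
  from has_derivative_add[OF this]
  show "((\<lambda>z. f z + g z) has_derivative (\<lambda>h. fst h * (fx z + gx z) + snd h * (fy z + gy z))) (at z)"
    by (rule has_derivative_eq_rhs) (simp add: algebra_simps)
qed

lemma has_partials_on_mult:
  assumes "has_partials_on U f fx fy" "has_partials_on U g gx gy"
  shows "has_partials_on U (\<lambda>z. f z * g z)
    (\<lambda>z. f z * gx z + fx z * g z) (\<lambda>z. f z * gy z + fy z * g z)"
  unfolding has_partials_on_def
proof
  fix z assume "z \<in> U"
  with assms have "(f has_derivative (\<lambda>h. fst h * fx z + snd h * fy z)) (at z)"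
    "(g has_derivative (\<lambda>h. fst h * gx z + snd h * gy z)) (at z)"
    by (auto simp: has_partials_on_def)
  from has_derivative_mult[OF this]
  show "((\<lambda>z. f z * g z) has_derivative
      (\<lambda>h. fst h * (f z * gx z + fx z * g z) + snd h * (f z * gy z + fy z * g z))) (at z)"
    by (rule has_derivative_eq_rhs) (simp add: algebra_simps)
qed

lemma Cinf_hull_step:
  assumes X: "\<And>f. X f \<Longrightarrow> Cinf_step U X f" and "Cinf_hull U X f"
  shows "Cinf_step U X f"
  using assms(2)
proof (induction rule: Cinf_hull.induct)
  case (base f)
  then show ?case by (rule X)
next
  case (Cinf f)
  then obtain fx fy where "has_partials_on U f fx fy" "Cinf_on U fx" "Cinf_on U fy"
    using Cinf_on_has_partials by blast
  with Cinf show ?case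
    unfolding Cinf_step_def by (blast intro: Cinf_hull.Cinf Cinf_on_continuous)
next
  case (add f g)
  then obtain fx fy gx gy where "continuous_on U f" "has_partials_on U f fx fy"
    "Cinf_hull U X fx" "Cinf_hull U X fy" "continuous_on U g" "has_partials_on U g gx gy"
    "Cinf_hull U X gx" "Cinf_hull U X gy"
    unfolding Cinf_step_def by blast
  then have "has_partials_on U (\<lambda>z. f z + g z) (\<lambda>z. fx z + gx z) (\<lambda>z. fy z + gy z)"
    "Cinf_hull U X (\<lambda>z. fx z + gx z)" "Cinf_hull U X (\<lambda>z. fy z + gy z)"
    "continuous_on U (\<lambda>z. f z + g z)"
    by (auto intro: has_partials_on_add Cinf_hull.add continuous_on_add)
  then show ?case
    unfolding Cinf_step_def by blast
next
  case (mult f g)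
  then obtain fx fy gx gy where "continuous_on U f" "has_partials_on U f fx fy"
    "Cinf_hull U X fx" "Cinf_hull U X fy" "continuous_on U g" "has_partials_on U g gx gy"
    "Cinf_hull U X gx" "Cinf_hull U X gy"
    unfolding Cinf_step_def by blast
  note fg = this mult.hyps
  have "has_partials_on U (\<lambda>z. f z * g z)
      (\<lambda>z. f z * gx z + fx z * g z) (\<lambda>z. f z * gy z + fy z * g z)"
    using fg by (intro has_partials_on_mult)
  moreover have "Cinf_hull U X (\<lambda>z. f z * gx z + fx z * g z)"
    "Cinf_hull U X (\<lambda>z. f z * gy z + fy z * g z)"
    using fg by (auto intro: Cinf_hull.add Cinf_hull.mult)
  moreover have "continuous_on U (\<lambda>z. f z * g z)"
    using fg by (intro continuous_on_mult)
  ultimately show ?case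
    unfolding Cinf_step_def by blast
qed

lemma Cinf_on_coinduct_upto:
  assumes "\<And>f. X f \<Longrightarrow> Cinf_step U X f" and "Cinf_hull U X f"
  shows "Cinf_on U f"
proof (rule Cinf_on.coinduct[of "Cinf_hull U X", OF assms(2)])
  fix g assume "Cinf_hull U X g"
  from Cinf_hull_step[OF assms(1) this] obtain gx gy where "continuous_on U g"
    "has_partials_on U g gx gy" "Cinf_hull U X gx" "Cinf_hull U X gy"
    unfolding Cinf_step_def by blast
  then show "\<exists>f fx fy. g = f \<and> continuous_on U f \<and>
      (\<forall>z\<in>U. (f has_derivative (\<lambda>h. fst h * fx z + snd h * fy z)) (at z)) \<and>
      (Cinf_hull U X fx \<or> Cinf_on U fx) \<and> (Cinf_hull U X fy \<or> Cinf_on U fy)"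
    unfolding has_partials_on_def by blast
qed

lemma Cinf_on_coinduct_single:
  assumes "continuous_on U f" "has_partials_on U f fx fy"
    "Cinf_hull U (\<lambda>g. g = f) fx" "Cinf_hull U (\<lambda>g. g = f) fy"
  shows "Cinf_on U f"
  by (rule Cinf_on_coinduct_upto[of "\<lambda>g. g = f"]) (use assms in \<open>auto simp: Cinf_step_def intro: Cinf_hull.base\<close>)

lemma Cinf_on_add: "Cinf_on U f \<Longrightarrow> Cinf_on U g \<Longrightarrow> Cinf_on U (\<lambda>z. f z + g z)"
  by (rule Cinf_on_coinduct_upto[of "\<lambda>_. False"]) (auto intro: Cinf_hull.add Cinf_hull.Cinf)

lemma Cinf_on_mult: "Cinf_on U f \<Longrightarrow> Cinf_on U g \<Longrightarrow> Cinf_on U (\<lambda>z. f z * g z)"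
  by (rule Cinf_on_coinduct_upto[of "\<lambda>_. False"]) (auto intro: Cinf_hull.mult Cinf_hull.Cinf)

lemma Cinf_on_affine: "Cinf_on U (\<lambda>z. a * fst z + b * snd z + c)"
proof (rule Cinf_on_coinduct_upto[of "\<lambda>f. \<exists>a b c. f = (\<lambda>z. a * fst z + b * snd z + c)"])
  let ?X = "\<lambda>f. \<exists>a b c. f = (\<lambda>z. a * fst z + b * snd z + c)"
  fix f :: "real \<times> real \<Rightarrow> real"
  assume "?X f"
  then obtain a b c where f: "f = (\<lambda>z. a * fst z + b * snd z + c)" by blast
  have "(f has_derivative (\<lambda>h. fst h * a + snd h * b)) (at z)" for z
    unfolding f by (rule has_derivative_eq_rhs, (rule derivative_intros)+) (simp add: fun_eq_iff mult.commute)
  then have "has_partials_on U f (\<lambda>z. a) (\<lambda>z. b)"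
    unfolding has_partials_on_def by blast
  moreover have "Cinf_hull U ?X (\<lambda>z. a)" "Cinf_hull U ?X (\<lambda>z. b)"
    by (intro Cinf_hull.base exI[of _ 0] exI[of _ 0] exI, simp)+
  moreover have "continuous_on U f"
    unfolding f by (intro continuous_intros)
  ultimately show "Cinf_step U ?X f"
    unfolding Cinf_step_def by blast
qed (blast intro: Cinf_hull.base)

lemma Cinf_on_const: "Cinf_on U (\<lambda>z. c)"
  using Cinf_on_affine[of U 0 0 c] by simp

lemma Cinf_on_fst: "Cinf_on U fst"
  using Cinf_on_affine[of U 1 0 0] by simp

lemma Cinf_on_snd: "Cinf_on U snd"
  using Cinf_on_affine[of U 0 1 0] by simp

lemma Cinf_on_uminus: "Cinf_on U f \<Longrightarrow> Cinf_on U (\<lambda>z. - f z)"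
  using Cinf_on_mult[OF Cinf_on_const, of U f "-1"] by simp

lemma Cinf_on_diff: "Cinf_on U f \<Longrightarrow> Cinf_on U g \<Longrightarrow> Cinf_on U (\<lambda>z. f z - g z)"
  using Cinf_on_add[OF _ Cinf_on_uminus, of U f g] by simp

lemma Cinf_on_power2: "Cinf_on U f \<Longrightarrow> Cinf_on U (\<lambda>z. (f z)\<^sup>2)"
  using Cinf_on_mult[of U f f] by (simp add: power2_eq_square)

lemma Cinf_on_compose:
  assumes h: "Cinf_on U h"
    and G: "\<And>z. z \<in> U \<Longrightarrow> (G has_real_derivative G' (h z)) (at (h z))"
    and G': "Cinf_hull U (\<lambda>f. f = (\<lambda>z. G (h z))) (\<lambda>z. G' (h z))"
  shows "Cinf_on U (\<lambda>z. G (h z))"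
proof -
  obtain hx hy where hd: "has_partials_on U h hx hy" and "Cinf_on U hx" "Cinf_on U hy"
    using Cinf_on_has_partials[OF h] by blast
  have der: "((\<lambda>z. G (h z)) has_derivative
      (\<lambda>d. fst d * (G' (h z) * hx z) + snd d * (G' (h z) * hy z))) (at z)" if "z \<in> U" for z
    using has_derivative_compose[OF hd[unfolded has_partials_on_def, rule_format, OF that]
        G[OF that, unfolded has_field_derivative_def]]
    by (rule has_derivative_eq_rhs) (auto simp: algebra_simps)
  show ?thesis
  proof (rule Cinf_on_coinduct_single)
    show "continuous_on U (\<lambda>z. G (h z))"
      using der by (intro continuous_at_imp_continuous_on ballI) (auto dest: has_derivative_continuous)
    show "has_partials_on U (\<lambda>z. G (h z)) (\<lambda>z. G' (h z) * hx z) (\<lambda>z. G' (h z) * hy z)"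
      unfolding has_partials_on_def using der by blast
    show "Cinf_hull U (\<lambda>f. f = (\<lambda>z. G (h z))) (\<lambda>z. G' (h z) * hx z)"
      "Cinf_hull U (\<lambda>f. f = (\<lambda>z. G (h z))) (\<lambda>z. G' (h z) * hy z)"
      using G' \<open>Cinf_on U hx\<close> \<open>Cinf_on U hy\<close> by (simp_all add: Cinf_hull.mult Cinf_hull.Cinf)
  qed
qed

lemma Cinf_on_exp: "Cinf_on U h \<Longrightarrow> Cinf_on U (\<lambda>z. exp (h z))"
  by (rule Cinf_on_compose[where G = exp and h = h and G' = exp]) (simp_all add: Cinf_hull.base DERIV_exp)

lemma Cinf_on_inverse:
  assumes "Cinf_on U h" "\<And>z. z \<in> U \<Longrightarrow> h z \<noteq> 0"
  shows "Cinf_on U (\<lambda>z. inverse (h z))"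
proof (rule Cinf_on_compose[where G = inverse and h = h and G' = "\<lambda>x. inverse x * inverse x * (-1)"])
  fix z assume "z \<in> U"
  then have "h z \<noteq> 0" by (rule assms(2))
  then show "(inverse has_real_derivative inverse (h z) * inverse (h z) * (-1)) (at (h z))"
    by (auto intro!: derivative_eq_intros simp: field_simps power2_eq_square)
next
  show "Cinf_hull U (\<lambda>f. f = (\<lambda>z. inverse (h z))) (\<lambda>z. inverse (h z) * inverse (h z) * (-1))"
    by (intro Cinf_hull.mult Cinf_hull.base Cinf_hull.Cinf Cinf_on_const) auto
qed (rule assms(1))

lemma Cinf_on_ln:
  assumes "Cinf_on U h" "\<And>z. z \<in> U \<Longrightarrow> h z > 0"
  shows "Cinf_on U (\<lambda>z. ln (h z))"
proof (rule Cinf_on_compose[where G = ln and h = h and G' = inverse])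
  show "Cinf_hull U (\<lambda>f. f = (\<lambda>z. ln (h z))) (\<lambda>z. inverse (h z))"
  proof (intro Cinf_hull.Cinf Cinf_on_inverse assms(1))
    fix z assume "z \<in> U"
    with assms(2) show "h z \<noteq> 0" by fastforce
  qed
next
  fix z assume "z \<in> U"
  with assms(2) show "(ln has_real_derivative inverse (h z)) (at (h z))"
    by (blast intro: DERIV_ln)
qed (rule assms(1))

lemma Cinf_on_divide:
  "Cinf_on U f \<Longrightarrow> Cinf_on U g \<Longrightarrow> (\<And>z. z \<in> U \<Longrightarrow> g z \<noteq> 0) \<Longrightarrow> Cinf_on U (\<lambda>z. f z / g z)"
  using Cinf_on_mult[OF _ Cinf_on_inverse, of U f g] by (simp add: divide_inverse)

lemma Cinf_on_cong:
  assumes "open U" "Cinf_on U g" "\<And>z. z \<in> U \<Longrightarrow> f z = g z"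
  shows "Cinf_on U f"
proof -
  obtain gx gy where gd: "has_partials_on U g gx gy" and "Cinf_on U gx" "Cinf_on U gy"
    using Cinf_on_has_partials[OF assms(2)] by blast
  have "continuous_on U f = continuous_on U g"
    by (rule continuous_on_cong[OF refl assms(3)])
  then have "continuous_on U f"
    using Cinf_on_continuous[OF assms(2)] by simp
  moreover have "has_partials_on U f gx gy"
    unfolding has_partials_on_def
  proof
    fix z assume z: "z \<in> U"
    show "(f has_derivative (\<lambda>h. fst h * gx z + snd h * gy z)) (at z)"
      by (rule has_derivative_transform_within_open[OF gd[unfolded has_partials_on_def, rule_format, OF z]
          assms(1) z]) (simp add: assms(3))
  qed
  moreover have "Cinf_hull U (\<lambda>h. h = f) gx" "Cinf_hull U (\<lambda>h. h = f) gy"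
    using \<open>Cinf_on U gx\<close> \<open>Cinf_on U gy\<close> by (auto intro: Cinf_hull.Cinf)
  ultimately show ?thesis by (rule Cinf_on_coinduct_single)
qed

lemma Cinf_on_powr:
  assumes "open U" "Cinf_on U f" "Cinf_on U e" "\<And>z. z \<in> U \<Longrightarrow> f z > 0"
  shows "Cinf_on U (\<lambda>z. f z powr e z)"
proof (rule Cinf_on_cong[OF assms(1) Cinf_on_exp[OF Cinf_on_mult[OF assms(3) Cinf_on_ln[OF assms(2,4)]]]])
  fix z assume "z \<in> U"
  then have "f z > 0" by (rule assms(4))
  then show "f z powr e z = exp (e z * ln (f z))" by (simp add: powr_def mult.commute)
qed

lemma Cinf_on_sqrt:
  assumes "open U" "Cinf_on U f" "\<And>z. z \<in> U \<Longrightarrow> f z > 0"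
  shows "Cinf_on U (\<lambda>z. sqrt (f z))"
proof (rule Cinf_on_cong[OF assms(1) Cinf_on_powr[OF assms(1,2) Cinf_on_const assms(3)]])
  fix z assume "z \<in> U"
  then have "f z > 0" by (rule assms(3))
  then show "sqrt (f z) = f z powr (1/2)" by (simp add: powr_half_sqrt)
qed

lemma eigenvalues_C_2x2:
  fixes a b c d :: real
  assumes "c \<noteq> 0"
  shows "eigenvalues_C (vector [vector [a, b], vector [c, d]] :: real^2^2) =
    {\<mu>. \<mu>\<^sup>2 - of_real (a + d) * \<mu> + of_real (a * d - b * c) = 0}"
proof -
  let ?M = "vector [vector [a, b], vector [c, d]] :: real^2^2"
  let ?A = "complex_of_real a" and ?B = "complex_of_real b"
  let ?C = "complex_of_real c" and ?D = "complex_of_real d"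
  have char: "\<mu>\<^sup>2 - of_real (a + d) * \<mu> + of_real (a * d - b * c) = ?A * ?D - ?B * ?C - (?A + ?D) * \<mu> + \<mu> * \<mu>"
    for \<mu> by (simp add: power2_eq_square algebra_simps)
  have eigvec: "(\<chi> i j. complex_of_real (?M $ i $ j)) *v v = \<mu> *s v \<longleftrightarrow>
      ?A * v$1 + ?B * v$2 = \<mu> * v$1 \<and> ?C * v$1 + ?D * v$2 = \<mu> * v$2" for v :: "complex^2" and \<mu>
    by (simp add: vec_eq_iff forall_2 matrix_vector_mult_def sum_2)
  have nonzero: "v \<noteq> 0 \<longleftrightarrow> v$1 \<noteq> 0 \<or> v$2 \<noteq> 0" for v :: "complex^2"
    by (simp add: vec_eq_iff forall_2)
  show ?thesis
  proof (rule set_eqI, rule iffI)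
    fix \<mu> :: complex assume "\<mu> \<in> eigenvalues_C ?M"
    then obtain v where v: "v \<noteq> 0" and "(\<chi> i j. complex_of_real (?M $ i $ j)) *v v = \<mu> *s v"
      unfolding eigenvalues_C_def by blast
    then have e1: "?A * v$1 + ?B * v$2 = \<mu> * v$1" and e2: "?C * v$1 + ?D * v$2 = \<mu> * v$2"
      unfolding eigvec by simp_all
    let ?\<chi> = "?A * ?D - ?B * ?C - (?A + ?D) * \<mu> + \<mu> * \<mu>"
    have "?\<chi> * v$1 = (?D - \<mu>) * (?A * v$1 + ?B * v$2 - \<mu> * v$1) - ?B * (?C * v$1 + ?D * v$2 - \<mu> * v$2)"
      "?\<chi> * v$2 = (?A - \<mu>) * (?C * v$1 + ?D * v$2 - \<mu> * v$2) - ?C * (?A * v$1 + ?B * v$2 - \<mu> * v$1)"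
      by (simp_all add: algebra_simps)
    then have "?\<chi> * v$1 = 0" "?\<chi> * v$2 = 0"
      by (simp_all only: e1 e2 diff_self mult_zero_right)
    with v have "?\<chi> = 0"
      by (metis mult_eq_0_iff nonzero)
    then show "\<mu> \<in> {\<mu>. \<mu>\<^sup>2 - of_real (a + d) * \<mu> + of_real (a * d - b * c) = 0}"
      unfolding char by simp
  next
    fix \<mu> :: complex assume "\<mu> \<in> {\<mu>. \<mu>\<^sup>2 - of_real (a + d) * \<mu> + of_real (a * d - b * c) = 0}"
    then have ch: "?A * ?D - ?B * ?C - (?A + ?D) * \<mu> + \<mu> * \<mu> = 0"
      unfolding char by simp
    let ?v = "vector [?D - \<mu>, - ?C] :: complex^2"
    have "?v \<noteq> 0" unfolding nonzero using assms by simp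
    moreover have "?A * (?D - \<mu>) + ?B * (- ?C) = \<mu> * (?D - \<mu>)"
      using ch by (simp add: algebra_simps)
    moreover have "?C * (?D - \<mu>) + ?D * (- ?C) = \<mu> * (- ?C)"
      by (simp add: algebra_simps)
    ultimately show "\<mu> \<in> eigenvalues_C ?M"
      unfolding eigenvalues_C_def eigvec by (intro CollectI exI[of _ ?v]) simp
  qed
qed

lemma eigenvalues_C_2x2_cis:
  fixes a b c d \<theta> :: real
  assumes "c \<noteq> 0" and "a * d - b * c = 1" and "a + d = 2 * cos \<theta>"
  shows "eigenvalues_C (vector [vector [a, b], vector [c, d]] :: real^2^2) = {cis \<theta>, cis (- \<theta>)}"
proof -
  have sum: "cis \<theta> + cis (- \<theta>) = of_real (a + d)"
    and prod: "cis \<theta> * cis (- \<theta>) = of_real (a * d - b * c)"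
    using assms(2,3) by (simp_all add: complex_eq_iff cis_mult)
  have "(\<mu> - cis \<theta>) * (\<mu> - cis (- \<theta>)) =
      \<mu>\<^sup>2 - (cis \<theta> + cis (- \<theta>)) * \<mu> + cis \<theta> * cis (- \<theta>)" for \<mu>
    by (simp add: power2_eq_square algebra_simps)
  then have "\<mu>\<^sup>2 - of_real (a + d) * \<mu> + of_real (a * d - b * c) = (\<mu> - cis \<theta>) * (\<mu> - cis (- \<theta>))"
    for \<mu> unfolding sum prod by simp
  then show ?thesis
    unfolding eigenvalues_C_2x2[OF assms(1)] by auto
qed

lemma tendsto_in_closure:
  assumes "\<forall>\<^sub>F x in F. f x \<in> A" and "(f \<longlongrightarrow> l) F" and "F \<noteq> bot"
  shows "l \<in> closure A"
proof (rule Lim_in_closed_set[OF closed_closure _ assms(3,2)])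
  show "\<forall>\<^sub>F x in F. f x \<in> closure A"
    using assms(1) by (rule eventually_mono) (erule closure_subset[THEN subsetD])
qed

lemma smooth_surface_graph:
  fixes G :: "real \<times> real \<Rightarrow> real"
  assumes "open U" and "Cinf_on U G"
  shows "smooth_surface ((\<lambda>z. (fst z, snd z, G z)) ` U)"
proof -
  define \<phi> where "\<phi> = (\<lambda>z. (fst z, snd z, G z))"
  obtain gx gy where D: "has_partials_on U G gx gy"
    using Cinf_on_has_partials[OF assms(2)] by blast
  have "smooth_param U \<phi>"
    unfolding smooth_param_def
  proof (intro conjI ballI)
    fix z assume z: "z \<in> U"
    have "(G has_derivative (\<lambda>h. fst h * gx z + snd h * gy z)) (at z)"
      using D z unfolding has_partials_on_def by blast
    then have "(\<phi> has_derivative (\<lambda>h. (fst h, snd h, fst h * gx z + snd h * gy z))) (at z)"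
      unfolding \<phi>_def
      by (intro has_derivative_Pair has_derivative_fst[OF has_derivative_ident]
          has_derivative_snd[OF has_derivative_ident])
    moreover have "inj (\<lambda>h::real \<times> real. (fst h, snd h, fst h * gx z + snd h * gy z))"
      by (auto simp: inj_def prod_eq_iff)
    ultimately show "\<exists>D. (\<phi> has_derivative D) (at z) \<and> inj D" by blast
  qed (use assms in \<open>simp_all add: \<phi>_def Cinf_on_fst Cinf_on_snd\<close>)
  moreover have "homeomorphism U (UNIV \<inter> \<phi> ` U) \<phi> (\<lambda>w. (fst w, fst (snd w)))"
    unfolding homeomorphism_def
  proof (intro conjI ballI)
    show "continuous_on U \<phi>"
      unfolding \<phi>_def by (intro continuous_intros Cinf_on_continuous[OF assms(2)])
    show "(\<lambda>w. (fst w, fst (snd w))) ` (UNIV \<inter> \<phi> ` U) = U"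
      by (force simp: \<phi>_def image_iff)
  qed (auto simp: \<phi>_def intro!: continuous_intros)
  ultimately show ?thesis
    unfolding smooth_surface_def \<phi>_def by blast
qed

section \<open>The exponent and the maximiser of the difference of powers\<close>

lemma pexp_pos:
  assumes "1 < \<delta>" "\<delta> < Phi"
  shows "0 < pexp \<delta>"
proof -
  have "2 * \<delta> - 1 < sqrt 5" "0 \<le> 2 * \<delta> - 1"
    using assms by (simp_all add: Phi_def)
  then have "(2 * \<delta> - 1)\<^sup>2 < (sqrt 5)\<^sup>2"
    by (rule power_strict_mono) simp
  then show ?thesis
    unfolding pexp_def by (simp add: power2_eq_square algebra_simps)
qed

lemma pexp_less: "1 < \<delta> \<Longrightarrow> pexp \<delta> < \<delta>"
  unfolding pexp_def by (simp add: power2_eq_square) (metis less_1_mult)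

lemma square_minus_one_pos: "1 < \<delta> \<Longrightarrow> 0 < \<delta>\<^sup>2 - (1::real)"
  by (simp add: power2_eq_square) (metis less_1_mult)

lemma powr_pexp_identities:
  assumes "0 < \<tau>"
  shows "\<tau> powr (\<delta>\<^sup>2 - \<delta>) * \<tau> powr pexp \<delta> = \<tau>"
    and "\<tau> powr (\<delta>\<^sup>2 - \<delta>) * \<tau> powr \<delta> = \<tau> powr (\<delta>\<^sup>2)"
    and "\<tau> powr \<delta> / \<tau> powr pexp \<delta> = \<tau> powr (\<delta>\<^sup>2 - 1)"
  using assms by (simp_all flip: powr_add powr_diff add: pexp_def)

lemma tau_m_powr:
  assumes "1 < \<delta>" "\<delta> < Phi"
  shows "tau_m \<delta> powr (\<delta>\<^sup>2 - 1) = pexp \<delta> / \<delta>"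
proof -
  have "\<delta>\<^sup>2 - 1 \<noteq> 0"
    using square_minus_one_pos[OF assms(1)] by linarith
  moreover have "0 < pexp \<delta>" "0 < \<delta>"
    using pexp_pos[OF assms] assms(1) by simp_all
  moreover have "tau_m \<delta> powr (\<delta>\<^sup>2 - 1) = (pexp \<delta> / \<delta>) powr (1 / (\<delta>\<^sup>2 - 1) * (\<delta>\<^sup>2 - 1))"
    unfolding tau_m_def by (rule powr_powr)
  ultimately show ?thesis
    by simp
qed

lemma tau_m_pos: "1 < \<delta> \<Longrightarrow> \<delta> < Phi \<Longrightarrow> 0 < tau_m \<delta>"
  using pexp_pos[of \<delta>] by (simp add: tau_m_def)

lemma tau_m_less_1:
  assumes "1 < \<delta>" "\<delta> < Phi"
  shows "tau_m \<delta> < 1"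
proof -
  have "(pexp \<delta> / \<delta>) powr (1 / (\<delta>\<^sup>2 - 1)) < 1 powr (1 / (\<delta>\<^sup>2 - 1))"
    using pexp_pos[OF assms] pexp_less[OF assms(1)] square_minus_one_pos[OF assms(1)] assms(1)
    by (intro powr_less_mono2) simp_all
  then show ?thesis
    unfolding tau_m_def by simp
qed

lemma FF_pos:
  assumes "1 < \<delta>" "0 < \<tau>" "\<tau> < 1"
  shows "0 < FF \<delta> \<tau>"
proof -
  have "\<tau> powr (\<delta> - pexp \<delta>) < 1 powr (\<delta> - pexp \<delta>)"
    using pexp_less[OF assms(1)] assms by (intro powr_less_mono2) simp_all
  then have "\<tau> powr \<delta> < \<tau> powr pexp \<delta>"
    using assms(2) by (simp add: powr_diff divide_less_eq)
  then show ?thesis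
    unfolding FF_def by simp
qed

section \<open>The branch of solutions\<close>

text \<open>On the locus \<open>g = 0\<close> the upper left entry of \<open>D\<G>\<^sub>\<tau>(\<tau>, s)\<close> is \<open>dg11 \<tau> \<delta>\<close> and the trace
  is \<open>dg11 \<tau> \<delta> + 1\<close>.  The roots of the quadratic for \<open>\<gamma>\<close> are written as
  \<open>(\<F>\<^sup>2 + k\<^sup>2 C\<^sup>2) / (\<F> \<plusminus> k \<surd>Q)\<close>, so that \<open>k = 1\<close> needs no separate treatment; the Boolean \<open>b\<close>
  selects the sign and the half circle containing \<open>s\<close>, \<open>b\<close> leading to \<open>s\<^sup>* = \<pi>/2\<close> and \<open>\<not> b\<close> to
  \<open>s\<^sup>* = 3\<pi>/2\<close>.\<close>

definition branch_sign :: "bool \<Rightarrow> real" where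
  "branch_sign b = (if b then 1 else -1)"

definition dg11 :: "real \<Rightarrow> real \<Rightarrow> real" where
  "dg11 \<tau> \<delta> = \<delta>\<^sup>2 - \<delta> + \<delta> * \<tau> powr (\<delta>\<^sup>2 - 1)"

definition cos_target :: "real \<Rightarrow> real \<Rightarrow> real \<Rightarrow> real \<Rightarrow> real" where
  "cos_target k K \<tau> \<delta> = K * (1 - dg11 \<tau> \<delta>) * \<tau> powr pexp \<delta> / k"

definition gamma_discr :: "real \<Rightarrow> real \<Rightarrow> real \<Rightarrow> real \<Rightarrow> real" where
  "gamma_discr k K \<tau> \<delta> = (FF \<delta> \<tau>)\<^sup>2 - (1 - k\<^sup>2) * (cos_target k K \<tau> \<delta>)\<^sup>2"

definition gamma_denom :: "bool \<Rightarrow> real \<Rightarrow> real \<Rightarrow> real \<Rightarrow> real \<Rightarrow> real" where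
  "gamma_denom b k K \<tau> \<delta> = FF \<delta> \<tau> + branch_sign b * k * sqrt (gamma_discr k K \<tau> \<delta>)"

definition gamma_branch :: "bool \<Rightarrow> real \<Rightarrow> real \<Rightarrow> real \<Rightarrow> real \<Rightarrow> real" where
  "gamma_branch b k K \<tau> \<delta> = ((FF \<delta> \<tau>)\<^sup>2 + k\<^sup>2 * (cos_target k K \<tau> \<delta>)\<^sup>2) / gamma_denom b k K \<tau> \<delta>"

definition s_branch :: "bool \<Rightarrow> real \<Rightarrow> real \<Rightarrow> real \<Rightarrow> real \<Rightarrow> real" where
  "s_branch b k K \<tau> \<delta> =
    (let x = cos_target k K \<tau> \<delta> / gamma_branch b k K \<tau> \<delta> in
     if b then arccos x else 2 * pi - arccos x)"

definition branch_domain :: "bool \<Rightarrow> real \<Rightarrow> real \<Rightarrow> (real \<times> real) set" where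
  "branch_domain b k K = {(\<tau>, \<delta>). 1 < \<delta> \<and> \<delta> < Phi \<and> 0 < \<tau> \<and> \<tau> < tau_m \<delta> \<and>
     0 < gamma_discr k K \<tau> \<delta> \<and> 0 < gamma_denom b k K \<tau> \<delta> \<and>
     0 < branch_sign b * (FF \<delta> \<tau> - gamma_branch b k K \<tau> \<delta>)}"

lemma dg11_pos: "1 < \<delta> \<Longrightarrow> 0 < \<tau> \<Longrightarrow> 0 < dg11 \<tau> \<delta>"
  unfolding dg11_def by (simp add: power2_eq_square add_pos_pos)

lemma dg11_less_1:
  assumes "1 < \<delta>" "\<delta> < Phi" "0 < \<tau>" "\<tau> < tau_m \<delta>"
  shows "dg11 \<tau> \<delta> < 1"
proof -
  have "\<tau> powr (\<delta>\<^sup>2 - 1) < tau_m \<delta> powr (\<delta>\<^sup>2 - 1)"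
    using square_minus_one_pos[OF assms(1)] assms by (intro powr_less_mono2) simp_all
  then have "\<delta> * \<tau> powr (\<delta>\<^sup>2 - 1) < pexp \<delta>"
    using assms(1) by (simp add: tau_m_powr[OF assms(1,2)] less_divide_eq mult.commute)
  then show ?thesis
    unfolding dg11_def pexp_def by simp
qed

lemma dg11_tau_m: "1 < \<delta> \<Longrightarrow> \<delta> < Phi \<Longrightarrow> dg11 (tau_m \<delta>) \<delta> = 1"
  by (simp add: dg11_def tau_m_powr pexp_def)

lemma cos_target_tau_m: "1 < \<delta> \<Longrightarrow> \<delta> < Phi \<Longrightarrow> cos_target k K (tau_m \<delta>) \<delta> = 0"
  by (simp add: cos_target_def dg11_tau_m)

lemma gfun_eq_0:
  assumes "0 < \<tau>" and "\<gamma> * (1 + k * sin s) = FF \<delta> \<tau>"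
  shows "gfun k \<delta> \<gamma> \<tau> s = 0"
proof -
  have "gfun k \<delta> \<gamma> \<tau> s = \<tau> powr (\<delta>\<^sup>2) + \<tau> powr (\<delta>\<^sup>2 - \<delta>) * FF \<delta> \<tau> - \<tau>"
    by (simp add: gfun_def assms(2)[symmetric] algebra_simps)
  also have "\<dots> = 0"
    using assms(1) by (simp add: FF_def right_diff_distrib powr_pexp_identities(1,2))
  finally show ?thesis .
qed

lemma Hset_memI:
  assumes k: "0 < k" and K: "0 < K" and \<delta>: "1 < \<delta>" "\<delta> < Phi"
    and \<tau>: "0 < \<tau>" "\<tau> < tau_m \<delta>" and \<gamma>: "0 < \<gamma>"
    and fixed: "\<gamma> * (1 + k * sin s) = FF \<delta> \<tau>"
    and det: "\<gamma> * cos s = cos_target k K \<tau> \<delta>"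
  shows "(\<tau>, \<delta>, \<gamma>, s) \<in> Hset k K"
proof -
  define a where "a = dg11 \<tau> \<delta>"
  have \<tau>1: "\<tau> < 1" using \<tau> tau_m_less_1[OF \<delta>] by simp
  have a: "0 < a" "a < 1"
    unfolding a_def using dg11_pos[OF \<delta>(1) \<tau>(1)] dg11_less_1[OF \<delta> \<tau>] by simp_all
  have entry11: "\<delta>\<^sup>2 * \<tau> powr (\<delta>\<^sup>2 - 1) + \<gamma> * (\<delta>\<^sup>2 - \<delta>) * \<tau> powr (- pexp \<delta>) * (1 + k * sin s) = a"
  proof -
    have "\<gamma> * (\<delta>\<^sup>2 - \<delta>) * \<tau> powr (- pexp \<delta>) * (1 + k * sin s) = (\<delta>\<^sup>2 - \<delta>) * (FF \<delta> \<tau> / \<tau> powr pexp \<delta>)"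
      by (simp add: fixed[symmetric] powr_minus divide_inverse)
    also have "FF \<delta> \<tau> / \<tau> powr pexp \<delta> = 1 - \<tau> powr (\<delta>\<^sup>2 - 1)"
      using \<tau>(1) by (simp add: FF_def diff_divide_distrib powr_pexp_identities(3))
    finally show ?thesis
      unfolding a_def dg11_def by (simp add: algebra_simps)
  qed
  have det1: "a * 1 - (\<gamma> * k * \<tau> powr (\<delta>\<^sup>2 - \<delta>) * cos s) * (- 1 / (K * \<tau>)) = 1"
  proof -
    have "(\<gamma> * k * \<tau> powr (\<delta>\<^sup>2 - \<delta>) * cos s) * (- 1 / (K * \<tau>))
        = - (k * \<tau> powr (\<delta>\<^sup>2 - \<delta>) * (\<gamma> * cos s)) / (K * \<tau>)"
      by (simp add: algebra_simps)
    also have "\<dots> = - ((1 - a) * (\<tau> powr (\<delta>\<^sup>2 - \<delta>) * \<tau> powr pexp \<delta>)) / \<tau>"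
      unfolding det cos_target_def a_def using k K \<tau>(1) by (simp add: field_simps)
    also have "\<dots> = a - 1"
      using \<tau>(1) by (simp add: powr_pexp_identities(1))
    finally show ?thesis by simp
  qed
  define \<theta> where "\<theta> = arccos ((a + 1) / 2)"
  have "-1 < (a + 1) / 2" "(a + 1) / 2 < 1"
    using a by simp_all
  then have \<theta>: "\<theta> \<in> {0<..<pi}" and trace: "a + 1 = 2 * cos \<theta>"
    using arccos_lt_bounded unfolding \<theta>_def by auto
  have "eigenvalues_C (DG k K \<delta> \<gamma> \<tau> s) = {cis \<theta>, cis (- \<theta>)}"
    unfolding DG_def
    by (rule eigenvalues_C_2x2_cis) (use K \<tau>(1) det1 trace entry11 in simp_all)
  then show ?thesis
    unfolding Hset_def using \<tau>(1) \<tau>1 \<delta>(1) \<gamma> \<theta> gfun_eq_0[OF \<tau>(1) fixed] by auto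
qed

lemma rationalized_root_eq:
  fixes F C k \<epsilon> :: real
  assumes "\<epsilon>\<^sup>2 = 1" and "Q\<^sup>2 = F\<^sup>2 - (1 - k\<^sup>2) * C\<^sup>2" and "F + \<epsilon> * k * Q \<noteq> 0"
  defines "\<gamma> \<equiv> (F\<^sup>2 + k\<^sup>2 * C\<^sup>2) / (F + \<epsilon> * k * Q)"
  shows "(F - \<gamma>)\<^sup>2 + k\<^sup>2 * C\<^sup>2 = k\<^sup>2 * \<gamma>\<^sup>2"
proof -
  define D where "D = F + \<epsilon> * k * Q"
  define N where "N = F\<^sup>2 + k\<^sup>2 * C\<^sup>2"
  have \<gamma>D: "\<gamma> * D = N"
    using assms(3) unfolding \<gamma>_def D_def N_def by simp
  have "D\<^sup>2 - 2 * F * D = (D - F)\<^sup>2 - F\<^sup>2"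
    by (simp add: power2_eq_square algebra_simps)
  also have "(D - F)\<^sup>2 = \<epsilon>\<^sup>2 * k\<^sup>2 * Q\<^sup>2"
    unfolding D_def by (simp add: power2_eq_square algebra_simps)
  finally have DD: "D\<^sup>2 - 2 * F * D = - (1 - k\<^sup>2) * N"
    using assms(1,2) unfolding N_def by (simp add: algebra_simps)
  have "D\<^sup>2 * ((F - \<gamma>)\<^sup>2 + k\<^sup>2 * C\<^sup>2 - k\<^sup>2 * \<gamma>\<^sup>2) =
      N * D\<^sup>2 - 2 * F * (\<gamma> * D) * D + (1 - k\<^sup>2) * (\<gamma> * D)\<^sup>2"
    unfolding N_def by (simp add: power2_eq_square algebra_simps)
  also have "\<dots> = N * (D\<^sup>2 - 2 * F * D + (1 - k\<^sup>2) * N)"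
    unfolding \<gamma>D by (simp add: power2_eq_square algebra_simps)
  also have "\<dots> = 0"
    using DD by (simp add: algebra_simps)
  finally show ?thesis
    using assms(3) unfolding D_def by simp
qed

lemma cos_sin_branch_angle:
  fixes x y :: real
  assumes "x\<^sup>2 + y\<^sup>2 = 1" and "0 \<le> branch_sign b * y"
  defines "s \<equiv> if b then arccos x else 2 * pi - arccos x"
  shows "cos s = x" and "sin s = y"
proof -
  have "x\<^sup>2 \<le> 1"
    using assms(1) by (smt (verit) zero_le_power2)
  then have "\<bar>x\<bar> \<le> 1"
    by (simp add: abs_square_le_1)
  moreover have "sqrt (1 - x\<^sup>2) = \<bar>y\<bar>"
    using assms(1) by (simp flip: real_sqrt_abs)
  ultimately show "cos s = x" "sin s = y"
    using assms(2) unfolding s_def branch_sign_def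
    by (auto simp: cos_arccos_abs sin_arccos_abs sin_diff cos_diff split: if_splits)
qed

lemma gamma_branch_solves:
  assumes k: "0 < k" and dom: "(\<tau>, \<delta>) \<in> branch_domain b k K"
  shows "0 < gamma_branch b k K \<tau> \<delta>"
    and "gamma_branch b k K \<tau> \<delta> * (1 + k * sin (s_branch b k K \<tau> \<delta>)) = FF \<delta> \<tau>"
    and "gamma_branch b k K \<tau> \<delta> * cos (s_branch b k K \<tau> \<delta>) = cos_target k K \<tau> \<delta>"
proof -
  define F C \<gamma> where "F = FF \<delta> \<tau>" "C = cos_target k K \<tau> \<delta>" "\<gamma> = gamma_branch b k K \<tau> \<delta>"
  have \<delta>: "1 < \<delta>" "\<delta> < Phi" and \<tau>: "0 < \<tau>" "\<tau> < tau_m \<delta>"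
    and Q: "0 < gamma_discr k K \<tau> \<delta>" and D: "0 < gamma_denom b k K \<tau> \<delta>"
    and sign: "0 < branch_sign b * (F - \<gamma>)"
    using dom unfolding branch_domain_def F_C_\<gamma>_def by auto
  have "0 < FF \<delta> \<tau>"
    using FF_pos \<delta>(1) \<tau> tau_m_less_1[OF \<delta>] by force
  then show \<gamma>: "0 < gamma_branch b k K \<tau> \<delta>"
    using D unfolding gamma_branch_def by (intro divide_pos_pos add_pos_nonneg) simp_all
  have "(F - \<gamma>)\<^sup>2 + k\<^sup>2 * C\<^sup>2 = k\<^sup>2 * \<gamma>\<^sup>2"
    unfolding F_C_\<gamma>_def gamma_branch_def gamma_denom_def
    by (rule rationalized_root_eq) (use Q D in \<open>auto simp: branch_sign_def gamma_discr_def gamma_denom_def\<close>)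
  then have "(C / \<gamma>)\<^sup>2 + ((F - \<gamma>) / (k * \<gamma>))\<^sup>2 = 1"
    using k \<gamma> unfolding F_C_\<gamma>_def by (simp add: field_simps)
  moreover have "0 \<le> branch_sign b * ((F - \<gamma>) / (k * \<gamma>))"
    using sign k \<gamma> unfolding F_C_\<gamma>_def by (simp add: mult.assoc[symmetric] divide_nonneg_pos)
  ultimately have "cos (s_branch b k K \<tau> \<delta>) = C / \<gamma>" "sin (s_branch b k K \<tau> \<delta>) = (F - \<gamma>) / (k * \<gamma>)"
    unfolding s_branch_def F_C_\<gamma>_def Let_def by (rule cos_sin_branch_angle)+
  with k \<gamma> show "gamma_branch b k K \<tau> \<delta> * (1 + k * sin (s_branch b k K \<tau> \<delta>)) = FF \<delta> \<tau>"
    "gamma_branch b k K \<tau> \<delta> * cos (s_branch b k K \<tau> \<delta>) = cos_target k K \<tau> \<delta>"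
    unfolding F_C_\<gamma>_def by (simp_all add: field_simps)
qed

lemma branch_point_in_Hset:
  assumes "0 < k" "0 < K" and dom: "(\<tau>, \<delta>) \<in> branch_domain b k K"
  shows "(\<tau>, \<delta>, gamma_branch b k K \<tau> \<delta>, s_branch b k K \<tau> \<delta>) \<in> Hset k K"
  using dom gamma_branch_solves[OF assms(1) dom]
  by (intro Hset_memI[OF assms(1,2)]) (simp_all add: branch_domain_def)

section \<open>Continuity and smoothness of the branch\<close>

lemma tendsto_pexp: "(d \<longlongrightarrow> \<delta>0) F \<Longrightarrow> ((\<lambda>x. pexp (d x)) \<longlongrightarrow> pexp \<delta>0) F"
  unfolding pexp_def by (intro tendsto_intros)

context
  fixes t d :: "'a \<Rightarrow> real" and \<tau>0 \<delta>0 :: real and F :: "'a filter"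
  assumes t: "(t \<longlongrightarrow> \<tau>0) F" and d: "(d \<longlongrightarrow> \<delta>0) F" and \<tau>0: "\<tau>0 \<noteq> 0"
begin

lemma tendsto_FF: "((\<lambda>x. FF (d x) (t x)) \<longlongrightarrow> FF \<delta>0 \<tau>0) F"
  unfolding FF_def by (intro tendsto_intros tendsto_powr tendsto_pexp t d \<tau>0)

lemma tendsto_cos_target: "((\<lambda>x. cos_target k K (t x) (d x)) \<longlongrightarrow> cos_target k K \<tau>0 \<delta>0) F"
  unfolding cos_target_def dg11_def divide_inverse
  by (intro tendsto_mult_right) (intro tendsto_intros tendsto_powr tendsto_pexp t d \<tau>0)

lemma tendsto_gamma_discr: "((\<lambda>x. gamma_discr k K (t x) (d x)) \<longlongrightarrow> gamma_discr k K \<tau>0 \<delta>0) F"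
  unfolding gamma_discr_def by (intro tendsto_intros tendsto_FF tendsto_cos_target)

lemma tendsto_gamma_denom: "((\<lambda>x. gamma_denom b k K (t x) (d x)) \<longlongrightarrow> gamma_denom b k K \<tau>0 \<delta>0) F"
  unfolding gamma_denom_def by (intro tendsto_intros tendsto_FF tendsto_gamma_discr)

lemma tendsto_gamma_branch:
  "gamma_denom b k K \<tau>0 \<delta>0 \<noteq> 0 \<Longrightarrow>
    ((\<lambda>x. gamma_branch b k K (t x) (d x)) \<longlongrightarrow> gamma_branch b k K \<tau>0 \<delta>0) F"
  unfolding gamma_branch_def by (intro tendsto_intros tendsto_FF tendsto_cos_target tendsto_gamma_denom)

lemma tendsto_s_branch:
  assumes "gamma_denom b k K \<tau>0 \<delta>0 \<noteq> 0" "gamma_branch b k K \<tau>0 \<delta>0 \<noteq> 0"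
    and "\<bar>cos_target k K \<tau>0 \<delta>0 / gamma_branch b k K \<tau>0 \<delta>0\<bar> < 1"
  shows "((\<lambda>x. s_branch b k K (t x) (d x)) \<longlongrightarrow> s_branch b k K \<tau>0 \<delta>0) F"
proof -
  have "((\<lambda>x. arccos (cos_target k K (t x) (d x) / gamma_branch b k K (t x) (d x))) \<longlongrightarrow>
      arccos (cos_target k K \<tau>0 \<delta>0 / gamma_branch b k K \<tau>0 \<delta>0)) F"
    using assms(3) unfolding abs_less_iff
    by (intro isCont_tendsto_compose[OF isCont_arccos] tendsto_divide tendsto_cos_target
        tendsto_gamma_branch assms(1,2)) linarith+
  then show ?thesis
    unfolding s_branch_def Let_def by (cases b) (simp_all add: tendsto_diff[OF tendsto_const])
qed

end

lemma tendsto_tau_m: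
  assumes "(d \<longlongrightarrow> \<delta>0) F" "1 < \<delta>0" "\<delta>0 < Phi"
  shows "((\<lambda>x. tau_m (d x)) \<longlongrightarrow> tau_m \<delta>0) F"
proof -
  have "pexp \<delta>0 / \<delta>0 \<noteq> 0" "\<delta>0 \<noteq> 0"
    using pexp_pos[OF assms(2,3)] assms(2) by auto
  moreover have "\<delta>0\<^sup>2 - 1 \<noteq> 0"
    using square_minus_one_pos[OF assms(2)] by linarith
  ultimately show ?thesis
    unfolding tau_m_def
    by (intro tendsto_powr tendsto_divide tendsto_diff tendsto_power tendsto_const tendsto_pexp assms(1))
qed

lemma open_branch_domain:
  assumes "k \<noteq> 0"
  shows "open (branch_domain b k K)"
proof (subst open_subopen, intro ballI)
  fix z assume "z \<in> branch_domain b k K"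
  then have z: "1 < snd z" "snd z < Phi" "0 < fst z" "fst z < tau_m (snd z)"
    "0 < gamma_discr k K (fst z) (snd z)" "0 < gamma_denom b k K (fst z) (snd z)"
    "0 < branch_sign b * (FF (snd z) (fst z) - gamma_branch b k K (fst z) (snd z))"
    unfolding branch_domain_def by auto
  have t: "(fst \<longlongrightarrow> fst z) (nhds z)" and d: "(snd \<longlongrightarrow> snd z) (nhds z)"
    by (intro tendsto_fst tendsto_snd filterlim_ident)+
  have nz: "fst z \<noteq> 0" using z(3) by simp
  have "\<forall>\<^sub>F y in nhds z. 1 < snd y" "\<forall>\<^sub>F y in nhds z. snd y < Phi" "\<forall>\<^sub>F y in nhds z. 0 < fst y"
    using z(1-3) by (auto intro: order_tendstoD t d)
  moreover have "\<forall>\<^sub>F y in nhds z. 0 < tau_m (snd y) - fst y"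
    using z(4) by (intro order_tendstoD(1)[OF tendsto_diff[OF tendsto_tau_m[OF d z(1,2)] t]]) simp
  moreover have "\<forall>\<^sub>F y in nhds z. 0 < gamma_discr k K (fst y) (snd y)"
    using z(5) by (intro order_tendstoD(1)[OF tendsto_gamma_discr[OF t d nz]])
  moreover have "\<forall>\<^sub>F y in nhds z. 0 < gamma_denom b k K (fst y) (snd y)"
    using z(6) by (intro order_tendstoD(1)[OF tendsto_gamma_denom[OF t d nz]])
  moreover have "\<forall>\<^sub>F y in nhds z. 0 < branch_sign b * (FF (snd y) (fst y) - gamma_branch b k K (fst y) (snd y))"
    using z(6,7)
    by (intro order_tendstoD(1)[OF tendsto_mult[OF tendsto_const
        tendsto_diff[OF tendsto_FF[OF t d nz] tendsto_gamma_branch[OF t d nz]]]]) simp_all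
  ultimately have "\<forall>\<^sub>F y in nhds z. y \<in> branch_domain b k K"
    by eventually_elim (auto simp: branch_domain_def)
  then show "\<exists>T. open T \<and> z \<in> T \<and> T \<subseteq> branch_domain b k K"
    unfolding eventually_nhds by blast
qed

lemma Cinf_on_gamma_branch:
  assumes "0 < k"
  shows "Cinf_on (branch_domain b k K) (\<lambda>z. gamma_branch b k K (fst z) (snd z))"
proof -
  let ?U = "branch_domain b k K"
  have U: "open ?U"
    using assms by (intro open_branch_domain) simp
  have z: "1 < snd z" "0 < fst z" "0 < gamma_discr k K (fst z) (snd z)"
    "0 < gamma_denom b k K (fst z) (snd z)" if "z \<in> ?U" for z
    using that unfolding branch_domain_def by auto
  have pexp: "Cinf_on ?U (\<lambda>z. pexp (snd z))"
    unfolding pexp_def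
    by (intro Cinf_on_add Cinf_on_uminus Cinf_on_power2 Cinf_on_snd Cinf_on_const)
  have powr: "Cinf_on ?U (\<lambda>z. fst z powr e z)" if "Cinf_on ?U e" for e
    using z(2) by (intro Cinf_on_powr[OF U Cinf_on_fst that])
  have FF: "Cinf_on ?U (\<lambda>z. FF (snd z) (fst z))"
    unfolding FF_def by (intro Cinf_on_diff powr pexp Cinf_on_snd)
  have dg11: "Cinf_on ?U (\<lambda>z. dg11 (fst z) (snd z))"
    unfolding dg11_def
    by (intro Cinf_on_add Cinf_on_diff Cinf_on_mult Cinf_on_power2 Cinf_on_snd Cinf_on_const powr)
  have C: "Cinf_on ?U (\<lambda>z. cos_target k K (fst z) (snd z))"
    unfolding cos_target_def using assms
    by (intro Cinf_on_divide Cinf_on_mult Cinf_on_diff Cinf_on_const dg11 powr pexp) auto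
  have Q: "Cinf_on ?U (\<lambda>z. gamma_discr k K (fst z) (snd z))"
    unfolding gamma_discr_def by (intro Cinf_on_diff Cinf_on_mult Cinf_on_power2 Cinf_on_const FF C)
  have D: "Cinf_on ?U (\<lambda>z. gamma_denom b k K (fst z) (snd z))"
    unfolding gamma_denom_def using z(3)
    by (intro Cinf_on_add Cinf_on_mult Cinf_on_const FF Cinf_on_sqrt[OF U Q])
  show ?thesis
    unfolding gamma_branch_def using z(4)
    by (intro Cinf_on_divide Cinf_on_add Cinf_on_mult Cinf_on_power2 Cinf_on_const FF C D) force
qed

lemma graph_gamma_branch_subset:
  assumes "0 < k" "0 < K"
  shows "(\<lambda>z. (fst z, snd z, gamma_branch b k K (fst z) (snd z))) ` branch_domain b k K \<subseteq> proj3 ` Hset k K"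
proof (rule image_subsetI)
  fix z assume "z \<in> branch_domain b k K"
  then have "(fst z, snd z) \<in> branch_domain b k K" by simp
  from branch_point_in_Hset[OF assms this]
  show "(fst z, snd z, gamma_branch b k K (fst z) (snd z)) \<in> proj3 ` Hset k K"
    by (force simp: proj3_def image_iff)
qed

section \<open>The branch near the critical point\<close>

lemma branch_at_tau_m:
  assumes k: "0 < k" and \<delta>: "1 < \<delta>" "\<delta> < Phi"
    and "(\<gamma> = M_F \<delta> / (1 + k) \<and> s = pi / 2) \<or>
         (0 < k \<and> k < 1 \<and> \<gamma> = M_F \<delta> / (1 - k) \<and> s = 3 * pi / 2)"
  obtains b where "gamma_branch b k K (tau_m \<delta>) \<delta> = \<gamma>" and "s_branch b k K (tau_m \<delta>) \<delta> = s"
    and "0 < \<gamma>" and "0 < gamma_discr k K (tau_m \<delta>) \<delta>" and "0 < gamma_denom b k K (tau_m \<delta>) \<delta>"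
    and "0 < branch_sign b * (FF \<delta> (tau_m \<delta>) - \<gamma>)"
proof -
  define b where "b = (\<gamma> = M_F \<delta> / (1 + k) \<and> s = pi / 2)"
  define M where "M = M_F \<delta>"
  define \<epsilon> where "\<epsilon> = branch_sign b"
  have M: "0 < M"
    unfolding M_def M_F_def using FF_pos \<delta>(1) tau_m_pos[OF \<delta>] tau_m_less_1[OF \<delta>] by blast
  have FF: "FF \<delta> (tau_m \<delta>) = M" and C: "cos_target k K (tau_m \<delta>) \<delta> = 0"
    unfolding M_def M_F_def using cos_target_tau_m[OF \<delta>] by simp_all
  have \<epsilon>k: "0 < 1 + \<epsilon> * k" and \<gamma>: "\<gamma> = M / (1 + \<epsilon> * k)"
    and s: "s = (if b then pi / 2 else 3 * pi / 2)"
    using assms(4) k unfolding b_def \<epsilon>_def branch_sign_def M_def by (auto split: if_splits)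
  have \<epsilon>: "\<epsilon> * \<epsilon> = 1"
    unfolding \<epsilon>_def branch_sign_def by simp
  have Q: "gamma_discr k K (tau_m \<delta>) \<delta> = M\<^sup>2"
    unfolding gamma_discr_def FF C by simp
  have D: "gamma_denom b k K (tau_m \<delta>) \<delta> = M * (1 + \<epsilon> * k)"
    unfolding gamma_denom_def Q FF \<epsilon>_def[symmetric] using M by (simp add: algebra_simps)
  show ?thesis
  proof (rule that[of b])
    show "gamma_branch b k K (tau_m \<delta>) \<delta> = \<gamma>"
      unfolding gamma_branch_def D FF C \<gamma> using M by (simp add: power2_eq_square)
    then show "s_branch b k K (tau_m \<delta>) \<delta> = s"
      unfolding s_branch_def C s by simp
    show "0 < \<gamma>"
      unfolding \<gamma> using M \<epsilon>k by simp
    show "0 < gamma_discr k K (tau_m \<delta>) \<delta>" "0 < gamma_denom b k K (tau_m \<delta>) \<delta>"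
      unfolding Q D using M \<epsilon>k by simp_all
    have "\<epsilon> * (M - \<gamma>) = M * k / (1 + \<epsilon> * k)"
      unfolding \<gamma> using \<epsilon>k \<epsilon> by (simp add: field_simps)
    then show "0 < branch_sign b * (FF \<delta> (tau_m \<delta>) - \<gamma>)"
      unfolding FF \<epsilon>_def[symmetric] using M k \<epsilon>k by simp
  qed
qed

lemma branch_tendsto_at_tau_m:
  assumes k: "0 < k" and \<delta>: "1 < \<delta>" "\<delta> < Phi"
    and \<gamma>: "gamma_branch b k K (tau_m \<delta>) \<delta> = \<gamma>" and s: "s_branch b k K (tau_m \<delta>) \<delta> = s"
    and pos: "0 < \<gamma>" "0 < gamma_discr k K (tau_m \<delta>) \<delta>" "0 < gamma_denom b k K (tau_m \<delta>) \<delta>"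
      "0 < branch_sign b * (FF \<delta> (tau_m \<delta>) - \<gamma>)"
  shows "\<forall>\<^sub>F \<tau> in at_left (tau_m \<delta>). (\<tau>, \<delta>) \<in> branch_domain b k K"
    and "((\<lambda>\<tau>. gamma_branch b k K \<tau> \<delta>) \<longlongrightarrow> \<gamma>) (at_left (tau_m \<delta>))"
    and "((\<lambda>\<tau>. s_branch b k K \<tau> \<delta>) \<longlongrightarrow> s) (at_left (tau_m \<delta>))"
proof -
  let ?F = "at_left (tau_m \<delta>)"
  have t: "((\<lambda>\<tau>. \<tau>) \<longlongrightarrow> tau_m \<delta>) ?F" and d: "((\<lambda>\<tau>. \<delta>) \<longlongrightarrow> \<delta>) ?F"
    by (intro tendsto_ident_at tendsto_const)+
  have nz: "tau_m \<delta> \<noteq> 0"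
    using tau_m_pos[OF \<delta>] by simp
  show lim\<gamma>: "((\<lambda>\<tau>. gamma_branch b k K \<tau> \<delta>) \<longlongrightarrow> \<gamma>) ?F"
    using tendsto_gamma_branch[OF t d nz, where b = b and k = k and K = K] pos(3) \<gamma> by simp
  show "((\<lambda>\<tau>. s_branch b k K \<tau> \<delta>) \<longlongrightarrow> s) ?F"
    using tendsto_s_branch[OF t d nz, where b = b and k = k and K = K] pos(1,3) \<gamma> s cos_target_tau_m[OF \<delta>] by simp
  have "\<forall>\<^sub>F \<tau> in ?F. \<tau> \<in> {0<..<tau_m \<delta>}"
    by (rule eventually_at_left_real[OF tau_m_pos[OF \<delta>]])
  moreover have "\<forall>\<^sub>F \<tau> in ?F. 0 < gamma_discr k K \<tau> \<delta>"
    using pos(2) by (intro order_tendstoD(1)[OF tendsto_gamma_discr[OF t d nz]])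
  moreover have "\<forall>\<^sub>F \<tau> in ?F. 0 < gamma_denom b k K \<tau> \<delta>"
    using pos(3) by (intro order_tendstoD(1)[OF tendsto_gamma_denom[OF t d nz]])
  moreover have "\<forall>\<^sub>F \<tau> in ?F. 0 < branch_sign b * (FF \<delta> \<tau> - gamma_branch b k K \<tau> \<delta>)"
    using pos(4)
    by (intro order_tendstoD(1)[OF tendsto_mult[OF tendsto_const tendsto_diff[OF tendsto_FF[OF t d nz] lim\<gamma>]]])
  ultimately show "\<forall>\<^sub>F \<tau> in ?F. (\<tau>, \<delta>) \<in> branch_domain b k K"
    by eventually_elim (use \<delta> in \<open>auto simp: branch_domain_def\<close>)
qed

theorem mainTheorem9:
  fixes k K \<tau>s \<delta>s \<gamma>s ss :: real
  assumes "k > 0" and "K > 0"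
    and "1 < \<delta>s" and "\<delta>s < Phi"
    and "\<tau>s = tau_m \<delta>s"
    and "(\<gamma>s = M_F \<delta>s / (1 + k) \<and> ss = pi / 2) \<or>
         (0 < k \<and> k < 1 \<and> \<gamma>s = M_F \<delta>s / (1 - k) \<and> ss = 3 * pi / 2)"
  shows "(\<tau>s, \<delta>s, \<gamma>s, ss) islimpt Hset k K \<and>
    (\<exists>S. smooth_surface S \<and> S \<subseteq> proj3 ` Hset k K \<and> (\<tau>s, \<delta>s, \<gamma>s) \<in> closure S)"
proof -
  obtain b where b: "gamma_branch b k K \<tau>s \<delta>s = \<gamma>s" "s_branch b k K \<tau>s \<delta>s = ss" "0 < \<gamma>s"
    "0 < gamma_discr k K \<tau>s \<delta>s" "0 < gamma_denom b k K \<tau>s \<delta>s" "0 < branch_sign b * (FF \<delta>s \<tau>s - \<gamma>s)"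
    using branch_at_tau_m[OF assms(1,3,4,6)] unfolding assms(5) by metis
  note branch = branch_tendsto_at_tau_m[OF assms(1,3,4) b[unfolded assms(5)], folded assms(5)]
  define S where "S = (\<lambda>z. (fst z, snd z, gamma_branch b k K (fst z) (snd z))) ` branch_domain b k K"
  have "\<forall>\<^sub>F \<tau> in at_left \<tau>s.
      (\<tau>, \<delta>s, gamma_branch b k K \<tau> \<delta>s, s_branch b k K \<tau> \<delta>s) \<in> Hset k K - {(\<tau>s, \<delta>s, \<gamma>s, ss)}"
    using branch(1) by eventually_elim (auto simp: branch_domain_def assms(5) branch_point_in_Hset assms(1,2))
  then have "(\<tau>s, \<delta>s, \<gamma>s, ss) islimpt Hset k K"
    unfolding islimpt_in_closure
    by (rule tendsto_in_closure) (intro tendsto_Pair tendsto_ident_at tendsto_const branch(2,3), simp)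
  moreover have "\<forall>\<^sub>F \<tau> in at_left \<tau>s. (\<tau>, \<delta>s, gamma_branch b k K \<tau> \<delta>s) \<in> S"
    using branch(1) unfolding S_def by eventually_elim force
  then have "(\<tau>s, \<delta>s, \<gamma>s) \<in> closure S"
    by (rule tendsto_in_closure) (intro tendsto_Pair tendsto_ident_at tendsto_const branch(2), simp)
  moreover have "smooth_surface S" "S \<subseteq> proj3 ` Hset k K"
    unfolding S_def using assms(1,2)
    by (simp_all add: smooth_surface_graph open_branch_domain Cinf_on_gamma_branch graph_gamma_branch_subset)
  ultimately show ?thesis by blast
qed

end
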